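(* For every tournament $T$ on $N$ nodes and every positive integer $k \le N$, the auxiliary bipartite digraph $G(T)$ contains no directed cycle of length $2$ (digon) and no directed cycle of length $4$.
   Context: Let $T=(V,E)$ be a tournament on $N$ nodes and let $k \le N$ be a positive integer. The auxiliary bipartite digraph $G(T)$ has vertex set $R \cup C$, where $R$ contains one vertex for each node of $T$ and $C$ contains one vertex for each $k$-element subset of $V$. Its arcs are: for each $X = \{v_1,\dots,v_k\} \in C$, the arcs $(v_i, X)$ for $1 \le i \le k$; and for each $u \in R$ and $X \in C$, the arc $(X, u)$ if and only if $(u, v_i) \in E$ for all $v_i \in X$. *)

theory Defs
  imports Main
begin

definition tournament :: "'a set \<Rightarrow> ('a \<times> 'a) set \<Rightarrow> bool" where
  "tournament V E \<longleftrightarrow> finite V \<and> E \<subseteq> V \<times> V \<and>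
     (\<forall>v\<in>V. (v, v) \<notin> E) \<and>
     (\<forall>u\<in>V. \<forall>v\<in>V. u \<noteq> v \<longrightarrow> ((u, v) \<in> E \<longleftrightarrow> (v, u) \<notin> E))"

text \<open>Auxiliary bipartite digraph G(T): vertices Inl v (the set R, one per node) and
Inr X (the set C, one per k-element subset X of V).\<close>
definition aux_vertices :: "'a set \<Rightarrow> nat \<Rightarrow> ('a + 'a set) set" where
  "aux_vertices V k = Inl ` V \<union> Inr ` {X. X \<subseteq> V \<and> card X = k}"

definition aux_arcs :: "'a set \<Rightarrow> ('a \<times> 'a) set \<Rightarrow> nat \<Rightarrow> (('a + 'a set) \<times> ('a + 'a set)) set" where
  "aux_arcs V E k =
     {(Inl v, Inr X) | v X. X \<subseteq> V \<and> card X = k \<and> v \<in> X} \<union>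
     {(Inr X, Inl u) | u X. X \<subseteq> V \<and> card X = k \<and> u \<in> V \<and> (\<forall>v\<in>X. (u, v) \<in> E)}"

definition directed_cycle :: "'b set \<Rightarrow> ('b \<times> 'b) set \<Rightarrow> nat \<Rightarrow> 'b list \<Rightarrow> bool" where
  "directed_cycle W A n ws \<longleftrightarrow> length ws = n \<and> distinct ws \<and> set ws \<subseteq> W \<and>
     (\<forall>i<n. (ws ! i, ws ! ((i + 1) mod n)) \<in> A)"

end

theory Submission
  imports Defs
begin

text \<open>G(T) is bipartite, and a path v \<rightarrow> X \<rightarrow> u between two nodes of T forces the arc
u \<rightarrow> v in T, because u dominates X and v \<in> X. A closed walk of length 2 or 4 in G(T)
therefore yields a loop or a pair of opposite arcs in T, neither of which a tournament has.\<close>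

lemma tournament_asym:
  assumes "tournament V E" and "(u, v) \<in> E"
  shows "(v, u) \<notin> E"
  using assms unfolding tournament_def by (cases "u = v") auto

lemma aux_arc_alternates:
  assumes "(p, q) \<in> aux_arcs V E k"
  shows "isl q \<longleftrightarrow> \<not> isl p"
  using assms by (auto simp: aux_arcs_def)

lemma aux_path_through_subset:
  assumes "(Inl v, q) \<in> aux_arcs V E k" and "(q, Inl u) \<in> aux_arcs V E k"
  shows "(u, v) \<in> E"
  using assms by (auto simp: aux_arcs_def)

lemma aux_arcs_no_closed_walk_2:
  assumes "tournament V E" and "(p, q) \<in> aux_arcs V E k" and "(q, p) \<in> aux_arcs V E k"
  shows False
proof -
  obtain v where "p = Inl v \<or> q = Inl v"
    using aux_arc_alternates[OF assms(2)] by (cases p; cases q) auto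
  then have "(v, v) \<in> E"
    using aux_path_through_subset[where v = v and u = v] assms(2,3) by auto
  then show False
    using tournament_asym[OF assms(1)] by blast
qed

lemma aux_arcs_no_closed_walk_4_from_node:
  assumes "tournament V E"
    and "(Inl v, b) \<in> aux_arcs V E k" "(b, c) \<in> aux_arcs V E k"
        "(c, e) \<in> aux_arcs V E k" "(e, Inl v) \<in> aux_arcs V E k"
  shows False
proof -
  obtain u where c: "c = Inl u"
    using aux_arc_alternates[OF assms(2)] aux_arc_alternates[OF assms(3)] by (cases c) auto
  have "(u, v) \<in> E"
    using aux_path_through_subset[where v = v and u = u] assms(2,3) c by simp
  moreover have "(v, u) \<in> E"
    using aux_path_through_subset[where v = u and u = v] assms(4,5) c by simp
  ultimately show False
    using tournament_asym[OF assms(1)] by blast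
qed

lemma aux_arcs_no_closed_walk_4:
  assumes "tournament V E"
    and "(a, b) \<in> aux_arcs V E k" "(b, c) \<in> aux_arcs V E k"
        "(c, e) \<in> aux_arcs V E k" "(e, a) \<in> aux_arcs V E k"
  shows False
proof (cases a)
  case (Inl v)
  then show False
    using aux_arcs_no_closed_walk_4_from_node[OF assms(1), where v = v and b = b and c = c and e = e]
      assms(2-5)
    by simp
next
  case (Inr X)
  then obtain v where "b = Inl v"
    using aux_arc_alternates[OF assms(2)] by (cases b) auto
  then show False
    using aux_arcs_no_closed_walk_4_from_node[OF assms(1), where v = v and b = c and c = e and e = a]
      assms(2-5)
    by simp
qed

lemma directed_cycle_2_arcs:
  assumes "directed_cycle W A 2 ws"
  obtains a b where "(a, b) \<in> A" "(b, a) \<in> A"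
proof
  from assms have arc: "(ws ! i, ws ! ((i + 1) mod 2)) \<in> A" if "i < 2" for i
    using that unfolding directed_cycle_def by blast
  show "(ws ! 0, ws ! 1) \<in> A" "(ws ! 1, ws ! 0) \<in> A"
    using arc[of 0] arc[of 1] by simp_all
qed

lemma directed_cycle_4_arcs:
  assumes "directed_cycle W A 4 ws"
  obtains a b c e where "(a, b) \<in> A" "(b, c) \<in> A" "(c, e) \<in> A" "(e, a) \<in> A"
proof
  from assms have arc: "(ws ! i, ws ! ((i + 1) mod 4)) \<in> A" if "i < 4" for i
    using that unfolding directed_cycle_def by blast
  show "(ws ! 0, ws ! 1) \<in> A" "(ws ! 1, ws ! 2) \<in> A"
       "(ws ! 2, ws ! 3) \<in> A" "(ws ! 3, ws ! 0) \<in> A"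
    using arc[of 0] arc[of 1, unfolded one_add_one] arc[of 2] arc[of 3] by simp_all
qed

theorem lemma2:
  fixes V :: "'a set" and E :: "('a \<times> 'a) set" and N k :: nat
  assumes "tournament V E" and "card V = N" and "0 < k" and "k \<le> N"
  shows "\<not> (\<exists>ws. directed_cycle (aux_vertices V k) (aux_arcs V E k) 2 ws) \<and>
         \<not> (\<exists>ws. directed_cycle (aux_vertices V k) (aux_arcs V E k) 4 ws)"
proof (intro conjI notI; elim exE)
  fix ws
  assume "directed_cycle (aux_vertices V k) (aux_arcs V E k) 2 ws"
  then show False
    by (rule directed_cycle_2_arcs) (rule aux_arcs_no_closed_walk_2[OF assms(1)])
next
  fix ws
  assume "directed_cycle (aux_vertices V k) (aux_arcs V E k) 4 ws"
  then show False
    by (rule directed_cycle_4_arcs) (rule aux_arcs_no_closed_walk_4[OF assms(1)])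
qed

end
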